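(* Let $n\geq 3$ and let $L^B$ be a blow-up of the Boolean lattice $L\cong \mathbf{2}^n$. Then \[ \operatorname{sdim}_M\bigl(G^c(L^B)\bigr)=|Z^*(L^B)|-2^{n-1}+1 . \]
   Context: Blow-up: let $L\cong\mathbf{2}^n$ be the Boolean lattice (subsets of $\{1,\dots,n\}$). The blow-up $L^B$ is the lattice obtained by keeping $0$ and $1$ and replacing every element $x\in L\setminus\{0,1\}$ by a finite nonempty chain $C_x$ (of arbitrary finite length, chosen independently for each $x$), ordered as follows: within $C_x$ the chain order; for $a\in C_x$, $b\in C_y$ with $x\neq y$, $a\leq b$ iff $x\leq y$ in $L$; $0$ is below and $1$ above everything. For a bounded lattice $M$ with $0$, $Z^*(M)=\{a\in M\setminus\{0\}:\ a\wedge b=0 \text{ for some } b\neq 0\}$. The graph $G^c(M)$ (complement of the zero-divisor graph) has vertex set $Z^*(M)$, two distinct vertices $a,b$ being adjacent iff $a\wedge b\neq 0$. For a connected graph $G$, a vertex $w$ strongly resolves $u,v$ if some shortest $u$–$w$ path contains $v$ or some shortest $v$–$w$ path contains $u$; a set $W$ of vertices is a strong resolving set if every pair of distinct vertices is strongly resolved by some vertex of $W$; $\operatorname{sdim}_M(G)$ is the minimum cardinality of a strong resolving set. *)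

theory Defs
  imports Main
begin

definition is_glb :: "'a set \<Rightarrow> ('a \<Rightarrow> 'a \<Rightarrow> bool) \<Rightarrow> 'a \<Rightarrow> 'a \<Rightarrow> 'a \<Rightarrow> bool" where
  "is_glb M le a b m \<longleftrightarrow> m \<in> M \<and> le m a \<and> le m b \<and>
     (\<forall>z\<in>M. le z a \<and> le z b \<longrightarrow> le z m)"

definition meet :: "'a set \<Rightarrow> ('a \<Rightarrow> 'a \<Rightarrow> bool) \<Rightarrow> 'a \<Rightarrow> 'a \<Rightarrow> 'a" where
  "meet M le a b = (THE m. is_glb M le a b m)"

definition Zstar :: "'a set \<Rightarrow> ('a \<Rightarrow> 'a \<Rightarrow> bool) \<Rightarrow> 'a \<Rightarrow> 'a set" where
  "Zstar M le z = {a \<in> M. a \<noteq> z \<and> (\<exists>b\<in>M. b \<noteq> z \<and> meet M le a b = z)}"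

definition Gc_adj :: "'a set \<Rightarrow> ('a \<Rightarrow> 'a \<Rightarrow> bool) \<Rightarrow> 'a \<Rightarrow> 'a \<Rightarrow> 'a \<Rightarrow> bool" where
  "Gc_adj M le z a b \<longleftrightarrow> a \<in> Zstar M le z \<and> b \<in> Zstar M le z \<and> a \<noteq> b \<and> meet M le a b \<noteq> z"

text \<open>A path (walk) from u to v in the graph (V,E) given as its list of vertices;
  its length is the number of edges.\<close>
definition is_path :: "'a set \<Rightarrow> ('a \<Rightarrow> 'a \<Rightarrow> bool) \<Rightarrow> 'a list \<Rightarrow> 'a \<Rightarrow> 'a \<Rightarrow> bool" where
  "is_path V E p u v \<longleftrightarrow> p \<noteq> [] \<and> hd p = u \<and> last p = v \<and> set p \<subseteq> V \<and>
     (\<forall>i. Suc i < length p \<longrightarrow> E (p ! i) (p ! Suc i))"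

definition gdist :: "'a set \<Rightarrow> ('a \<Rightarrow> 'a \<Rightarrow> bool) \<Rightarrow> 'a \<Rightarrow> 'a \<Rightarrow> nat" where
  "gdist V E u v = (LEAST k. \<exists>p. is_path V E p u v \<and> length p = Suc k)"

definition shortest_path :: "'a set \<Rightarrow> ('a \<Rightarrow> 'a \<Rightarrow> bool) \<Rightarrow> 'a list \<Rightarrow> 'a \<Rightarrow> 'a \<Rightarrow> bool" where
  "shortest_path V E p u v \<longleftrightarrow> is_path V E p u v \<and> length p = Suc (gdist V E u v)"

definition strongly_resolves :: "'a set \<Rightarrow> ('a \<Rightarrow> 'a \<Rightarrow> bool) \<Rightarrow> 'a \<Rightarrow> 'a \<Rightarrow> 'a \<Rightarrow> bool" where
  "strongly_resolves V E w u v \<longleftrightarrow>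
     (\<exists>p. shortest_path V E p u w \<and> v \<in> set p) \<or> (\<exists>p. shortest_path V E p v w \<and> u \<in> set p)"

definition strong_resolving_set :: "'a set \<Rightarrow> ('a \<Rightarrow> 'a \<Rightarrow> bool) \<Rightarrow> 'a set \<Rightarrow> bool" where
  "strong_resolving_set V E W \<longleftrightarrow> W \<subseteq> V \<and>
     (\<forall>u\<in>V. \<forall>v\<in>V. u \<noteq> v \<longrightarrow> (\<exists>w\<in>W. strongly_resolves V E w u v))"

definition sdim :: "'a set \<Rightarrow> ('a \<Rightarrow> 'a \<Rightarrow> bool) \<Rightarrow> nat" where
  "sdim V E = (LEAST k. \<exists>W. strong_resolving_set V E W \<and> finite W \<and> card W = k)"

text \<open>L = subsets of {1..n}; each x in L - {0,1} (proper nonempty subset) is replaced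
  by the chain Mid x 0 < Mid x 1 < ... < Mid x (c x - 1).\<close>
datatype belem = Bot | Top | Mid "nat set" nat

definition proper_sub :: "nat \<Rightarrow> nat set \<Rightarrow> bool" where
  "proper_sub n x \<longleftrightarrow> x \<subseteq> {1..n} \<and> x \<noteq> {} \<and> x \<noteq> {1..n}"

definition blowup :: "nat \<Rightarrow> (nat set \<Rightarrow> nat) \<Rightarrow> belem set" where
  "blowup n c = {Bot, Top} \<union> {Mid x i | x i. proper_sub n x \<and> i < c x}"

fun ble :: "belem \<Rightarrow> belem \<Rightarrow> bool" where
  "ble Bot _ = True"
| "ble _ Top = True"
| "ble Top _ = False"
| "ble (Mid x i) Bot = False"
| "ble (Mid x i) (Mid y j) = (if x = y then i \<le> j else x \<subseteq> y)"

end

theory Submission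
  imports Defs
begin

text \<open>
  The elements of \<open>Z\<^sup>*(L\<^sup>B)\<close> are exactly the chain elements, and two of them are adjacent
  in \<open>G\<^sup>c(L\<^sup>B)\<close> iff their underlying subsets of \<open>{1..n}\<close> meet; for \<open>n \<ge> 3\<close> this graph has
  diameter 2. A third vertex can strongly resolve neither two twins nor two non-adjacent
  vertices of a graph of diameter 2, so the projection onto \<open>L\<close> maps the complement of a strong
  resolving set injectively onto an intersecting family of proper subsets, which contains at
  most one set of each complementary pair: at most \<open>2^(n-1) - 1\<close> sets. Conversely, removing the
  bottoms of the chains over the sets containing 1 leaves a strong resolving set: two such
  bottoms over \<open>x\<close> and \<open>y\<close> with \<open>y \<not>\<subseteq> x\<close> are resolved by the bottom of the
  chain over \<open>{1..n} - x\<close>, which is reached from the first through the second.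
\<close>

section \<open>Shortest paths and strong resolution\<close>

lemma is_path_singleton: "u \<in> V \<Longrightarrow> is_path V E [u] u u"
  by (simp add: is_path_def)

lemma is_path_Cons:
  assumes "is_path V E q b w" "a \<in> V" "E a b"
  shows "is_path V E (a # q) a w"
  using assms unfolding is_path_def
  by (auto simp: nth_Cons hd_conv_nth split: nat.split)

lemma is_path_drop:
  assumes "is_path V E p u w" "k < length p"
  shows "is_path V E (drop k p) (p ! k) w"
  using assms set_drop_subset[of k p] unfolding is_path_def
  by (auto simp: hd_drop_conv_nth last_drop)

lemma gdist_less_length:
  assumes "is_path V E q u w"
  shows "gdist V E u w < length q"
proof -
  have "length q = Suc (length q - 1)"
    using assms by (simp add: is_path_def)
  then have "gdist V E u w \<le> length q - 1"
    unfolding gdist_def by (metis (mono_tags, lifting) Least_le assms)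
  then show ?thesis
    using \<open>length q = Suc (length q - 1)\<close> by linarith
qed

lemma shortest_path_exists:
  assumes "is_path V E q u w"
  shows "\<exists>p. shortest_path V E p u w"
proof -
  have "length q = Suc (length q - 1)"
    using assms by (simp add: is_path_def)
  then have "\<exists>k p. is_path V E p u w \<and> length p = Suc k"
    using assms by blast
  then show ?thesis
    unfolding shortest_path_def gdist_def by (rule LeastI_ex)
qed

lemma shortest_path_length_le:
  "shortest_path V E p u w \<Longrightarrow> is_path V E q u w \<Longrightarrow> length p \<le> length q"
  using gdist_less_length by (fastforce simp: shortest_path_def)

lemma is_path_interior_index:
  assumes "is_path V E p u w" "v \<in> set p" "v \<noteq> u" "v \<noteq> w"
  shows "\<exists>k. k \<noteq> 0 \<and> Suc k < length p \<and> p ! k = v"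
proof -
  obtain k where k: "k < length p" "p ! k = v"
    using assms(2) by (auto simp: in_set_conv_nth)
  have "k \<noteq> 0"
    using k assms(1,3) by (metis hd_conv_nth is_path_def)
  moreover have "k \<noteq> length p - 1"
    using k assms(1,4) by (auto simp: is_path_def last_conv_nth)
  ultimately show ?thesis
    using k by (metis Suc_lessI diff_Suc_1)
qed

lemma strongly_resolves_commute:
  "strongly_resolves V E w u v \<longleftrightarrow> strongly_resolves V E w v u"
  unfolding strongly_resolves_def by blast

lemma strongly_resolves_endpoint:
  assumes "is_path V E q u v"
  shows "strongly_resolves V E v u v"
proof -
  obtain p where "shortest_path V E p u v"
    using shortest_path_exists[OF assms] by blast
  moreover have "v \<in> set p"
    using calculation by (metis is_path_def last_in_set shortest_path_def)
  ultimately show ?thesis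
    unfolding strongly_resolves_def by blast
qed

text \<open>Jumping from u straight to the successor of v would shorten the path.\<close>
lemma dominated_not_on_shortest_path:
  assumes sp: "shortest_path V E p u w" and "v \<in> set p" "v \<noteq> u" "v \<noteq> w"
    and dominated: "\<And>t. E v t \<Longrightarrow> t \<noteq> u \<Longrightarrow> E u t"
  shows False
proof -
  have path: "is_path V E p u w" and u: "u \<in> V"
    using sp by (auto simp: shortest_path_def is_path_def)
  obtain k where "k \<noteq> 0" "Suc k < length p" "p ! k = v"
    using is_path_interior_index[OF path assms(2-4)] by blast
  let ?t = "p ! Suc k"
  let ?rest = "drop (Suc k) p"
  have rest: "is_path V E ?rest ?t w"
    using is_path_drop[OF path \<open>Suc k < length p\<close>] .
  have "E v ?t"
    using path \<open>Suc k < length p\<close> \<open>p ! k = v\<close> by (auto simp: is_path_def)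
  have "\<exists>q. is_path V E q u w \<and> length q \<le> length ?rest + 1"
  proof (cases "?t = u")
    case True
    then show ?thesis
      using rest by auto
  next
    case False
    then show ?thesis
      using is_path_Cons[OF rest u] dominated \<open>E v ?t\<close> by fastforce
  qed
  then obtain q where "is_path V E q u w" "length q \<le> length p - k"
    using \<open>Suc k < length p\<close> by auto
  then show False
    using shortest_path_length_le[OF sp] \<open>k \<noteq> 0\<close> \<open>Suc k < length p\<close> by fastforce
qed

lemma interior_of_short_shortest_path:
  assumes sp: "shortest_path V E p u w" and "gdist V E u w \<le> 2"
    and "v \<in> set p" "v \<noteq> u" "v \<noteq> w"
  shows "E u v"
proof -
  have path: "is_path V E p u w" and len: "length p \<le> 3"
    using sp assms(2) by (auto simp: shortest_path_def)
  obtain k where "k \<noteq> 0" "Suc k < length p" "p ! k = v"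
    using is_path_interior_index[OF path assms(3-5)] by blast
  then have "k = 1"
    using len by linarith
  then show ?thesis
    using path \<open>Suc k < length p\<close> \<open>p ! k = v\<close> by (auto simp: is_path_def hd_conv_nth)
qed

lemma strongly_resolves_twinsD:
  assumes "strongly_resolves V E w u v" "u \<noteq> v"
    and "\<And>t. E u t \<Longrightarrow> t \<noteq> v \<Longrightarrow> E v t" "\<And>t. E v t \<Longrightarrow> t \<noteq> u \<Longrightarrow> E u t"
  shows "w = u \<or> w = v"
proof (rule ccontr)
  assume w: "\<not> (w = u \<or> w = v)"
  from assms(1) show False
    unfolding strongly_resolves_def
  proof (elim disjE exE conjE)
    fix p assume "shortest_path V E p u w" "v \<in> set p"
    then show False
      by (rule dominated_not_on_shortest_path) (use assms(2,4) w in auto)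
  next
    fix p assume "shortest_path V E p v w" "u \<in> set p"
    then show False
      by (rule dominated_not_on_shortest_path) (use assms(2,3) w in auto)
  qed
qed

lemma strongly_resolves_nonadjacentD:
  assumes "strongly_resolves V E w u v" "u \<noteq> v" "\<not> E u v" "\<not> E v u"
    and diameter: "\<And>x y. x \<in> V \<Longrightarrow> y \<in> V \<Longrightarrow> gdist V E x y \<le> 2"
  shows "w = u \<or> w = v"
proof (rule ccontr)
  assume w: "\<not> (w = u \<or> w = v)"
  have adjacent: "E x y"
    if "shortest_path V E p x w" "y \<in> set p" "y \<noteq> x" "y \<noteq> w" for p x y
  proof (rule interior_of_short_shortest_path[OF that(1) diameter that(2-4)])
    show "x \<in> V" "w \<in> V"
      using that(1) by (auto simp: shortest_path_def is_path_def)
  qed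
  from assms(1) show False
    unfolding strongly_resolves_def
  proof (elim disjE exE conjE)
    fix p assume "shortest_path V E p u w" "v \<in> set p"
    then show False
      using adjacent assms(2,3) w by metis
  next
    fix p assume "shortest_path V E p v w" "u \<in> set p"
    then show False
      using adjacent assms(2,4) w by metis
  qed
qed

lemma strongly_resolves_common_neighbour:
  assumes "u \<in> V" "v \<in> V" "w \<in> V" "E u v" "E v w" "\<not> E u w" "u \<noteq> w"
  shows "strongly_resolves V E w u v"
proof -
  have path: "is_path V E [u, v, w] u w"
    using assms by (blast intro: is_path_Cons is_path_singleton)
  obtain p where sp: "shortest_path V E p u w"
    using shortest_path_exists[OF path] by blast
  then have p: "is_path V E p u w"
    by (simp add: shortest_path_def)
  have "length p \<noteq> 1"
    using p assms(7) by (auto simp: is_path_def length_Suc_conv)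
  moreover have "length p \<noteq> 2"
    using p assms(6) by (auto simp: is_path_def numeral_2_eq_2 length_Suc_conv)
  moreover have "length p \<le> 3" "length p \<noteq> 0"
    using shortest_path_length_le[OF sp path] p by (auto simp: is_path_def)
  ultimately have "shortest_path V E [u, v, w] u w"
    using sp path by (simp add: shortest_path_def)
  then show ?thesis
    unfolding strongly_resolves_def by force
qed

lemma sdim_eqI:
  assumes "strong_resolving_set V E W" "finite W"
    and "\<And>W'. strong_resolving_set V E W' \<Longrightarrow> finite W' \<Longrightarrow> card W \<le> card W'"
  shows "sdim V E = card W"
  unfolding sdim_def
  by (rule Least_equality) (use assms in auto)

section \<open>Families of sets closed under complementation\<close>

lemma card_intersecting_family_le:
  assumes "finite P" and compl: "\<And>A. A \<in> P \<Longrightarrow> S - A \<in> P" and "P \<subseteq> Pow S" "F \<subseteq> P"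
    and intersecting: "\<And>A B. A \<in> F \<Longrightarrow> B \<in> F \<Longrightarrow> A \<inter> B \<noteq> {}"
  shows "2 * card F \<le> card P"
proof -
  have inj: "inj_on (\<lambda>A. S - A) P"
    using \<open>P \<subseteq> Pow S\<close> by (auto intro!: inj_onI)
  have "F \<inter> (\<lambda>A. S - A) ` F = {}"
    using intersecting by blast
  moreover have "F \<union> (\<lambda>A. S - A) ` F \<subseteq> P"
    using \<open>F \<subseteq> P\<close> compl by blast
  moreover have "card ((\<lambda>A. S - A) ` F) = card F"
    using card_image inj_on_subset[OF inj \<open>F \<subseteq> P\<close>] by blast
  moreover have "finite F"
    using \<open>finite P\<close> \<open>F \<subseteq> P\<close> finite_subset by blast
  ultimately have "card F + card F \<le> card P"
    using card_Un_disjoint[of F "(\<lambda>A. S - A) ` F"] card_mono[OF \<open>finite P\<close>, of "F \<union> (\<lambda>A. S - A) ` F"]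
    by simp
  then show ?thesis
    by simp
qed

lemma card_members_containing:
  assumes "finite P" and compl: "\<And>A. A \<in> P \<Longrightarrow> S - A \<in> P" and "P \<subseteq> Pow S" "a \<in> S"
  shows "2 * card {A \<in> P. a \<in> A} = card P"
proof -
  let ?F = "{A \<in> P. a \<in> A}"
  have inj: "inj_on (\<lambda>A. S - A) P"
    using \<open>P \<subseteq> Pow S\<close> by (auto intro!: inj_onI)
  have "P = ?F \<union> (\<lambda>A. S - A) ` ?F"
  proof (intro equalityI subsetI)
    fix A assume A: "A \<in> P"
    show "A \<in> ?F \<union> (\<lambda>A. S - A) ` ?F"
    proof (cases "a \<in> A")
      case False
      have "A = S - (S - A)"
        using A \<open>P \<subseteq> Pow S\<close> by blast
      moreover have "S - A \<in> ?F"
        using False compl[OF A] \<open>a \<in> S\<close> by blast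
      ultimately show ?thesis
        by blast
    qed (use A in blast)
  next
    fix A assume "A \<in> ?F \<union> (\<lambda>A. S - A) ` ?F"
    then show "A \<in> P"
      using compl by blast
  qed
  moreover have "?F \<inter> (\<lambda>A. S - A) ` ?F = {}"
    by blast
  moreover have "card ((\<lambda>A. S - A) ` ?F) = card ?F"
    by (rule card_image, rule inj_on_subset[OF inj]) blast
  moreover have "finite ?F"
    using \<open>finite P\<close> by simp
  ultimately show ?thesis
    using card_Un_disjoint[of ?F "(\<lambda>A. S - A) ` ?F"] by simp
qed

section \<open>The blow-up of the Boolean lattice and its graph\<close>

lemma ble_refl: "ble a a"
  by (cases a) auto

lemma ble_Top [simp]: "ble a Top"
  by (cases a) auto

lemma ble_antisym: "ble a b \<Longrightarrow> ble b a \<Longrightarrow> a = b"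
  by (cases a; cases b) (auto split: if_splits)

lemma meet_eqI: "is_glb M ble a b m \<Longrightarrow> meet M ble a b = m"
  unfolding meet_def is_glb_def by (rule the_equality) (auto intro: ble_antisym)

text \<open>The projection of the blow-up onto the Boolean lattice; the value at Top is junk.\<close>
fun base :: "belem \<Rightarrow> nat set" where
  "base (Mid x i) = x"
| "base Bot = {}"
| "base Top = {}"

lemma is_glb_Bot_if_disjoint:
  "x \<inter> y = {} \<Longrightarrow> is_glb (blowup n c) ble (Mid x i) (Mid y j) Bot"
  by (auto simp: is_glb_def blowup_def proper_sub_def split: if_splits; blast)

locale boolean_blowup =
  fixes n :: nat and c :: "nat set \<Rightarrow> nat"
  assumes n_ge_3: "n \<ge> 3"
    and chains_nonempty: "\<And>x. proper_sub n x \<Longrightarrow> c x \<ge> 1"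
begin

abbreviation Z :: "belem set" where
  "Z \<equiv> Zstar (blowup n c) ble Bot"

abbreviation adj :: "belem \<Rightarrow> belem \<Rightarrow> bool" where
  "adj \<equiv> Gc_adj (blowup n c) ble Bot"

lemma Mid_bottom_in_blowup: "proper_sub n x \<Longrightarrow> Mid x 0 \<in> blowup n c"
  using chains_nonempty by (fastforce simp: blowup_def)

lemma is_glb_if_intersecting:
  assumes "proper_sub n x" "proper_sub n y" "x \<inter> y \<noteq> {}" "i < c x" "j < c y"
  shows "\<exists>m. m \<noteq> Bot \<and> is_glb (blowup n c) ble (Mid x i) (Mid y j) m"
proof -
  consider "x = y" | "x \<subset> y" | "y \<subset> x" | "\<not> x \<subseteq> y" "\<not> y \<subseteq> x"
    by blast
  then show ?thesis
  proof cases
    case 1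
    then show ?thesis
      using assms by (intro exI[of _ "Mid x (min i j)"]) (auto simp: is_glb_def blowup_def)
  next
    case 2
    then show ?thesis
      using assms by (intro exI[of _ "Mid x i"]) (auto simp: is_glb_def blowup_def)
  next
    case 3
    then show ?thesis
      using assms by (intro exI[of _ "Mid y j"]) (auto simp: is_glb_def blowup_def)
  next
    case 4
    have "proper_sub n (x \<inter> y)"
      using assms(1,3) 4 by (auto simp: proper_sub_def)
    with chains_nonempty have "c (x \<inter> y) - 1 < c (x \<inter> y)"
      by (simp add: Suc_le_eq)
    then show ?thesis
      using assms 4 \<open>proper_sub n (x \<inter> y)\<close>
      by (intro exI[of _ "Mid (x \<inter> y) (c (x \<inter> y) - 1)"])
        (auto simp: is_glb_def blowup_def split: if_splits)
  qed
qed

lemma Zstar_blowup: "Z = {Mid x i | x i. proper_sub n x \<and> i < c x}"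
proof (intro equalityI subsetI)
  fix a assume a: "a \<in> Z"
  then obtain b where "b \<in> blowup n c" "meet (blowup n c) ble a b = Bot" "b \<noteq> Bot"
    by (auto simp: Zstar_def)
  moreover have "is_glb (blowup n c) ble Top b b" if "b \<in> blowup n c"
    using that by (auto simp: is_glb_def ble_refl)
  ultimately have "a \<noteq> Top"
    using meet_eqI by metis
  then show "a \<in> {Mid x i | x i. proper_sub n x \<and> i < c x}"
    using a by (auto simp: Zstar_def blowup_def)
next
  fix a assume "a \<in> {Mid x i | x i. proper_sub n x \<and> i < c x}"
  then obtain x i where a: "a = Mid x i" "proper_sub n x" "i < c x"
    by blast
  have compl: "proper_sub n ({1..n} - x)"
    using a(2) unfolding proper_sub_def by blast
  have "meet (blowup n c) ble a (Mid ({1..n} - x) 0) = Bot"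
    unfolding a(1) by (rule meet_eqI, rule is_glb_Bot_if_disjoint) blast
  then show "a \<in> Z"
    using a Mid_bottom_in_blowup[OF compl] by (auto simp: Zstar_def blowup_def)
qed

lemma Gc_adj_blowup: "adj a b \<longleftrightarrow> a \<in> Z \<and> b \<in> Z \<and> a \<noteq> b \<and> base a \<inter> base b \<noteq> {}"
proof (cases "a \<in> Z \<and> b \<in> Z")
  case True
  then obtain x i y j where ab: "a = Mid x i" "proper_sub n x" "i < c x"
    "b = Mid y j" "proper_sub n y" "j < c y"
    by (auto simp: Zstar_blowup)
  have "meet (blowup n c) ble a b \<noteq> Bot \<longleftrightarrow> x \<inter> y \<noteq> {}"
  proof (cases "x \<inter> y = {}")
    case True
    then show ?thesis
      using meet_eqI[OF is_glb_Bot_if_disjoint] ab by simp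
  next
    case False
    then show ?thesis
      using is_glb_if_intersecting[OF ab(2,5) False ab(3,6)] meet_eqI ab by metis
  qed
  then show ?thesis
    using ab by (auto simp: Gc_adj_def)
qed (auto simp: Gc_adj_def)

lemma Mid_in_Zstar: "proper_sub n x \<Longrightarrow> i < c x \<Longrightarrow> Mid x i \<in> Z"
  by (auto simp: Zstar_blowup)

lemma Mid_bottom_in_Zstar: "proper_sub n x \<Longrightarrow> Mid x 0 \<in> Z"
  using chains_nonempty by (simp add: Mid_in_Zstar Suc_le_eq)

lemma finite_proper_sub: "finite {x. proper_sub n x}"
  by (rule finite_subset[of _ "Pow {1..n}"]) (auto simp: proper_sub_def)

lemma finite_Zstar: "finite Z"
proof -
  have "Z = (\<Union>x\<in>{x. proper_sub n x}. Mid x ` {..<c x})"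
    by (auto simp: Zstar_blowup)
  then show ?thesis
    using finite_proper_sub by simp
qed

lemma Zstar_path:
  assumes "u \<in> Z" "w \<in> Z"
  obtains q where "is_path Z adj q u w" "length q \<le> 3"
proof -
  consider "u = w" | "adj u w" | "u \<noteq> w" "base u \<inter> base w = {}"
    using assms Gc_adj_blowup by blast
  then show ?thesis
  proof cases
    case 1
    show ?thesis
      by (rule that[of "[u]"]) (use is_path_singleton[OF assms(1)] 1 in auto)
  next
    case 2
    show ?thesis
      by (rule that[of "[u, w]"]) (use is_path_Cons[OF is_path_singleton[of w Z adj] assms(1) 2] assms in auto)
  next
    case 3
    obtain x i y j where "u = Mid x i" "proper_sub n x" "w = Mid y j" "proper_sub n y"
      using assms by (auto simp: Zstar_blowup)
    then obtain e f where ef: "e \<in> base u" "f \<in> base w" "{e, f} \<subseteq> {1..n}"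
      unfolding proper_sub_def by fastforce
    have "card {e, f} \<le> 2"
      by (cases "e = f") auto
    then have "card {e, f} < card {1..n}"
      using n_ge_3 by simp
    then have "proper_sub n {e, f}"
      using ef(3) unfolding proper_sub_def by fastforce
    then have m: "Mid {e, f} 0 \<in> Z"
      by (rule Mid_bottom_in_Zstar)
    then have "adj u (Mid {e, f} 0)" "adj (Mid {e, f} 0) w"
      using assms ef 3(2) by (auto simp: Gc_adj_blowup)
    then have "is_path Z adj [u, Mid {e, f} 0, w] u w"
      using assms m by (blast intro: is_path_Cons is_path_singleton)
    then show ?thesis
      by (rule that) simp
  qed
qed

lemma gdist_Zstar_le_2:
  assumes "u \<in> Z" "w \<in> Z"
  shows "gdist Z adj u w \<le> 2"
proof -
  obtain q where "is_path Z adj q u w" "length q \<le> 3"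
    using Zstar_path[OF assms] .
  then show ?thesis
    using gdist_less_length[of Z adj q u w] by simp
qed

lemma base_outside_strong_resolving_set:
  assumes "strong_resolving_set Z adj W" "u \<in> Z - W" "v \<in> Z - W" "u \<noteq> v"
  shows "base u \<noteq> base v" "base u \<inter> base v \<noteq> {}"
proof -
  obtain w where "w \<in> W" "strongly_resolves Z adj w u v"
    using assms unfolding strong_resolving_set_def by blast
  then have resolved: "\<not> (w = u \<or> w = v)"
    using assms(2,3) by blast
  show "base u \<noteq> base v"
  proof
    assume "base u = base v"
    then have "adj u t \<Longrightarrow> t \<noteq> v \<Longrightarrow> adj v t" "adj v t \<Longrightarrow> t \<noteq> u \<Longrightarrow> adj u t" for t
      using assms(2,3) by (auto simp: Gc_adj_blowup)
    then show False
      using strongly_resolves_twinsD[OF \<open>strongly_resolves Z adj w u v\<close> assms(4)] resolved by blast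
  qed
  show "base u \<inter> base v \<noteq> {}"
  proof
    assume "base u \<inter> base v = {}"
    then have "\<not> adj u v" "\<not> adj v u"
      by (auto simp: Gc_adj_blowup)
    then show False
      using strongly_resolves_nonadjacentD[OF \<open>strongly_resolves Z adj w u v\<close> assms(4)]
        gdist_Zstar_le_2 resolved by blast
  qed
qed

definition star_sets :: "nat set set" where
  "star_sets = {x. proper_sub n x \<and> 1 \<in> x}"

definition star_bottoms :: "belem set" where
  "star_bottoms = (\<lambda>x. Mid x 0) ` star_sets"

lemma card_star_sets_double: "2 * card star_sets = card {x. proper_sub n x}"
proof -
  have "2 * card {A \<in> {x. proper_sub n x}. 1 \<in> A} = card {x. proper_sub n x}"
    by (rule card_members_containing[where S = "{1..n}"])
      (use finite_proper_sub n_ge_3 in \<open>auto simp: proper_sub_def\<close>)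
  then show ?thesis
    by (simp add: star_sets_def)
qed

lemma card_Diff_strong_resolving_set_le:
  assumes "strong_resolving_set Z adj W"
  shows "card (Z - W) \<le> card star_sets"
proof -
  have "inj_on base (Z - W)"
    using base_outside_strong_resolving_set[OF assms] by (meson inj_onI)
  moreover have "2 * card (base ` (Z - W)) \<le> card {x. proper_sub n x}"
  proof (rule card_intersecting_family_le[where S = "{1..n}"])
    fix A B assume "A \<in> base ` (Z - W)" "B \<in> base ` (Z - W)"
    then obtain u v where uv: "u \<in> Z - W" "v \<in> Z - W" "A = base u" "B = base v"
      by blast
    show "A \<inter> B \<noteq> {}"
    proof (cases "u = v")
      case True
      then show ?thesis
        using uv by (auto simp: Zstar_blowup proper_sub_def)
    next
      case False
      then show ?thesis
        using base_outside_strong_resolving_set(2)[OF assms uv(1,2)] uv(3,4) by simp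
    qed
  qed (use finite_proper_sub in \<open>auto simp: proper_sub_def Zstar_blowup\<close>)
  ultimately show ?thesis
    using card_star_sets_double card_image by fastforce
qed

lemma strongly_resolves_star_pair:
  assumes "x \<in> star_sets" "y \<in> star_sets" "\<not> y \<subseteq> x"
  shows "strongly_resolves Z adj (Mid ({1..n} - x) 0) (Mid x 0) (Mid y 0)"
proof (rule strongly_resolves_common_neighbour)
  have proper: "proper_sub n x" "proper_sub n y" "proper_sub n ({1..n} - x)"
    using assms(1,2) by (auto simp: star_sets_def proper_sub_def)
  then show "Mid x 0 \<in> Z" "Mid y 0 \<in> Z" "Mid ({1..n} - x) 0 \<in> Z"
    by (simp_all add: Mid_bottom_in_Zstar)
  then show "adj (Mid x 0) (Mid y 0)" "adj (Mid y 0) (Mid ({1..n} - x) 0)"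
    "\<not> adj (Mid x 0) (Mid ({1..n} - x) 0)" "Mid x 0 \<noteq> Mid ({1..n} - x) 0"
    using assms proper by (auto simp: Gc_adj_blowup star_sets_def proper_sub_def)
qed

lemma complement_bottom_in_Zstar_Diff_star_bottoms:
  assumes "x \<in> star_sets"
  shows "Mid ({1..n} - x) 0 \<in> Z - star_bottoms"
proof -
  have "1 \<in> {1..n}"
    using n_ge_3 by simp
  then have "proper_sub n ({1..n} - x)"
    using assms unfolding star_sets_def proper_sub_def by blast
  then show ?thesis
    using assms by (auto simp: star_bottoms_def star_sets_def Mid_bottom_in_Zstar)
qed

lemma strong_resolving_set_Zstar_Diff_star_bottoms:
  "strong_resolving_set Z adj (Z - star_bottoms)"
  unfolding strong_resolving_set_def
proof (intro conjI ballI impI)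
  fix u v assume uv: "u \<in> Z" "v \<in> Z" "u \<noteq> v"
  show "\<exists>w\<in>Z - star_bottoms. strongly_resolves Z adj w u v"
  proof (cases "u \<in> star_bottoms \<and> v \<in> star_bottoms")
    case True
    then obtain x y where u: "u = Mid x 0" and v: "v = Mid y 0"
      and x: "x \<in> star_sets" and y: "y \<in> star_sets"
      by (auto simp: star_bottoms_def)
    consider "\<not> y \<subseteq> x" | "\<not> x \<subseteq> y"
      using uv(3) u v by blast
    then show ?thesis
    proof cases
      case 1
      show ?thesis
        unfolding u v
        using strongly_resolves_star_pair[OF x y 1] complement_bottom_in_Zstar_Diff_star_bottoms[OF x] ..
    next
      case 2
      have "strongly_resolves Z adj (Mid ({1..n} - y) 0) (Mid x 0) (Mid y 0)"
        by (subst strongly_resolves_commute) (rule strongly_resolves_star_pair[OF y x 2])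
      then show ?thesis
        unfolding u v using complement_bottom_in_Zstar_Diff_star_bottoms[OF y] by blast
    qed
  next
    case False
    obtain p where "is_path Z adj p u v"
      using Zstar_path[OF uv(1,2)] by blast
    then have v_resolves: "strongly_resolves Z adj v u v"
      by (rule strongly_resolves_endpoint)
    obtain q where "is_path Z adj q v u"
      using Zstar_path[OF uv(2,1)] by blast
    then have u_resolves: "strongly_resolves Z adj u u v"
      by (subst strongly_resolves_commute) (rule strongly_resolves_endpoint)
    from False consider "u \<notin> star_bottoms" | "v \<notin> star_bottoms"
      by blast
    then show ?thesis
    proof cases
      case 1
      with uv(1) u_resolves show ?thesis by blast
    next
      case 2
      with uv(2) v_resolves show ?thesis by blast
    qed
  qed
qed blast

lemma star_bottoms_subset_Zstar: "star_bottoms \<subseteq> Z"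
  by (auto simp: star_bottoms_def star_sets_def intro!: Mid_bottom_in_Zstar)

lemma card_star_bottoms: "card star_bottoms = card star_sets"
  unfolding star_bottoms_def by (rule card_image) (simp add: inj_on_def)

lemma sdim_Zstar: "sdim Z adj = card Z - card star_sets"
proof (rule trans[OF sdim_eqI[OF strong_resolving_set_Zstar_Diff_star_bottoms]])
  show "finite (Z - star_bottoms)"
    using finite_Zstar by simp
  show "card (Z - star_bottoms) = card Z - card star_sets"
    using star_bottoms_subset_Zstar card_star_bottoms
    by (simp add: card_Diff_subset finite_subset[OF _ finite_Zstar])
  fix W assume W: "strong_resolving_set Z adj W" "finite W"
  then have "W \<subseteq> Z"
    by (simp add: strong_resolving_set_def)
  then show "card (Z - star_bottoms) \<le> card W"
    using card_Diff_strong_resolving_set_le[OF W(1)] card_Diff_subset[OF W(2) \<open>W \<subseteq> Z\<close>]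
      \<open>card (Z - star_bottoms) = card Z - card star_sets\<close> by linarith
qed

lemma card_star_sets: "card star_sets = 2 ^ (n - 1) - 1"
proof -
  have "{x. proper_sub n x} = Pow {1..n} - {{}, {1..n}}"
    by (auto simp: proper_sub_def)
  then have "card {x. proper_sub n x} = 2 ^ n - 2"
    using n_ge_3 by (simp add: card_Diff_subset card_Pow)
  moreover have "(2::nat) ^ n = 2 * 2 ^ (n - 1)"
    using n_ge_3 by (simp flip: power_Suc)
  ultimately show ?thesis
    using card_star_sets_double by simp
qed

end

theorem theorem3p20:
  fixes n :: nat and c :: "nat set \<Rightarrow> nat"
  assumes "n \<ge> 3"
    and "\<And>x. proper_sub n x \<Longrightarrow> c x \<ge> 1"
  shows "int (sdim (Zstar (blowup n c) ble Bot) (Gc_adj (blowup n c) ble Bot))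
         = int (card (Zstar (blowup n c) ble Bot)) - 2 ^ (n - 1) + 1"
proof -
  interpret boolean_blowup n c
    using assms by unfold_locales
  have "card star_sets \<le> card Z"
    using card_mono[OF finite_Zstar star_bottoms_subset_Zstar] card_star_bottoms by simp
  then have "int (sdim Z adj) = int (card Z) - int (card star_sets)"
    using sdim_Zstar by simp
  also have "int (card star_sets) = 2 ^ (n - 1) - 1"
    using card_star_sets by (simp add: of_nat_diff)
  finally show ?thesis
    by simp
qed

end
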